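(* Let $d\geq 1$, let $\mathscr{Y}=(\mathbb{P}^5)^d$ be the variety of $d$-tuples of conics in $\mathbb{P}^2$ (over $\mathbb{C}$), and let $h$ be a rational function on $\mathscr{Y}$. Suppose that for every $d$-tuple $(\mathcal{C}_1,\dots,\mathcal{C}_d)$ of conics in $\mathbb{P}^3$ and every two camera projections $\pi,\pi'$ for which both sides are defined, $h(\pi(\mathcal{C}_1),\dots,\pi(\mathcal{C}_d))=h(\pi'(\mathcal{C}_1),\dots,\pi'(\mathcal{C}_d))$. Then $h$ is constant. In other words, there is no nonconstant rational invariant of $d$ conics in $\mathbb{P}^3$ that can be computed from their perspective projection.
   Context: A conic in $\mathbb{P}^2$ is the zero set of a nonzero quadratic form in $3$ variables, up to scalar, so the conics in $\mathbb{P}^2$ are parametrized by $\mathbb{P}^5$. A conic in $\mathbb{P}^3$ is a nondegenerate conic contained in a plane of $\mathbb{P}^3$. A camera projection with center $\bar{o}\in\mathbb{P}^3$ is a map $\pi:\mathbb{P}^3\setminus\{\bar{o}\}\to\mathbb{P}^2$ induced by a rank-$3$ complex $3\times4$ matrix whose kernel is $\bar{o}$; the image $\pi(\mathcal{C})$ of a conic $\mathcal{C}$ whose plane does not contain $\bar{o}$ is a conic in $\mathbb{P}^2$. *)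

theory Defs
  imports "HOL-Analysis.Analysis"
begin

text \<open>Points of (P^5)^d are represented by their affine cones: y :: complex^6^'d,
  block i being the coefficient vector of the i-th plane conic. Index type 'd has d elements.\<close>

text \<open>Polynomial functions in the 6d coordinates y$i$j (over the infinite field C these are
  exactly the polynomials).\<close>
inductive polyfun :: "(complex^6^'d \<Rightarrow> complex) \<Rightarrow> bool" where
  pf_const: "polyfun (\<lambda>y. c)"
| pf_var: "polyfun (\<lambda>y. y $ i $ j)"
| pf_add: "polyfun p \<Longrightarrow> polyfun q \<Longrightarrow> polyfun (\<lambda>y. p y + q y)"
| pf_mult: "polyfun p \<Longrightarrow> polyfun q \<Longrightarrow> polyfun (\<lambda>y. p y * q y)"

definition multihom :: "('d::finite \<Rightarrow> nat) \<Rightarrow> (complex^6^'d \<Rightarrow> complex) \<Rightarrow> bool" where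
  "multihom e p \<longleftrightarrow>
     (\<forall>(l::'d \<Rightarrow> complex) y. p (\<chi> i. l i *s (y $ i)) = (\<Prod>i\<in>UNIV. l i ^ e i) * p y)"

text \<open>Rational function on (P^5)^d: quotient P/Q of multihomogeneous polynomials of the
  same multidegree, Q not identically zero.\<close>
definition rational_fun :: "(complex^6^'d::finite \<Rightarrow> complex) \<Rightarrow> (complex^6^'d \<Rightarrow> complex) \<Rightarrow> bool" where
  "rational_fun P Q \<longleftrightarrow> polyfun P \<and> polyfun Q \<and> (\<exists>e. multihom e P \<and> multihom e Q)
     \<and> (\<exists>y. Q y \<noteq> 0)"

definition conic_eval :: "complex^6 \<Rightarrow> complex^3 \<Rightarrow> complex" where
  "conic_eval c w = c$1 * (w$1)^2 + c$2 * (w$2)^2 + c$3 * (w$3)^2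
      + c$4 * w$1 * w$2 + c$5 * w$1 * w$3 + c$6 * w$2 * w$3"

definition qform :: "complex^3^3 \<Rightarrow> complex^3 \<Rightarrow> complex" where
  "qform A v = (\<Sum>i\<in>UNIV. \<Sum>j\<in>UNIV. v$i * A$i$j * v$j)"

text \<open>A conic in P^3 is given by an injective linear map M : C^3 \<rightarrow> C^4 (embedding a plane)
  and a nondegenerate symmetric 3x3 matrix A; it is the image of the plane conic v^T A v = 0.
  We record it by its affine cone (nonzero vectors of C^4).\<close>
definition space_conic :: "complex^3^4 \<Rightarrow> complex^3^3 \<Rightarrow> bool" where
  "space_conic M A \<longleftrightarrow> inj ((*v) M) \<and> transpose A = A \<and> det A \<noteq> 0"

definition conic_cone :: "complex^3^4 \<Rightarrow> complex^3^3 \<Rightarrow> (complex^4) set" where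
  "conic_cone M A = {M *v v | v. v \<noteq> 0 \<and> qform A v = 0}"

text \<open>Camera: rank 3 complex 3x4 matrix (equivalently surjective).\<close>
definition camera :: "complex^4^3 \<Rightarrow> bool" where
  "camera C \<longleftrightarrow> surj ((*v) C)"

definition center_off_plane :: "complex^4^3 \<Rightarrow> complex^3^4 \<Rightarrow> bool" where
  "center_off_plane C M \<longleftrightarrow> (\<forall>x. x \<noteq> 0 \<and> C *v x = 0 \<longrightarrow> x \<notin> range ((*v) M))"

definition is_image_conic :: "complex^6 \<Rightarrow> complex^4^3 \<Rightarrow> complex^3^4 \<Rightarrow> complex^3^3 \<Rightarrow> bool" where
  "is_image_conic c C M A \<longleftrightarrow>
     {w. w \<noteq> 0 \<and> conic_eval c w = 0} = (\<lambda>x. C *v x) ` conic_cone M A"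

end

theory Submission
  imports Defs "HOL-Computational_Algebra.Polynomial"
begin

text \<open>Take the camera x |-> (x1, x2, x3) + x4 g and place all conics but one in the plane x4 = 0,
  on which it agrees with the camera x |-> (x1, x2, x3), and the remaining one in the plane
  x4 = n . (x1, x2, x3). Comparing the two images shows that the invariant is unchanged when one
  plane conic is replaced by its pullback along a rank-one update I + f n^T of the identity.
  These moves act transitively on nondegenerate plane conics (Lagrange's reduction to
  x^2 + y^2 + z^2), so the invariant takes one value on all tuples of nondegenerate conics.
  All identities involved are polynomial after clearing denominators, so they extend from
  the Zariski dense set where the discriminants and denominators do not vanish.\<close>

section \<open>Polynomial functions\<close>

lemma polyfun_along_line:
  assumes "polyfun f"
  shows "\<exists>p. \<forall>t. f (\<chi> i j. a$i$j + t * (b$i$j - a$i$j)) = poly p t"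
  using assms
proof induction
  case (pf_const c)
  show ?case by (rule exI[of _ "[:c:]"]) simp
next
  case (pf_var i j)
  show ?case by (rule exI[of _ "[:a$i$j, b$i$j - a$i$j:]"]) (simp add: algebra_simps)
next
  case (pf_add p q)
  then obtain p' q' where "\<forall>t. p (\<chi> i j. a$i$j + t * (b$i$j - a$i$j)) = poly p' t"
    and "\<forall>t. q (\<chi> i j. a$i$j + t * (b$i$j - a$i$j)) = poly q' t" by blast
  then show ?case by (intro exI[of _ "p' + q'"]) simp
next
  case (pf_mult p q)
  then obtain p' q' where "\<forall>t. p (\<chi> i j. a$i$j + t * (b$i$j - a$i$j)) = poly p' t"
    and "\<forall>t. q (\<chi> i j. a$i$j + t * (b$i$j - a$i$j)) = poly q' t" by blast
  then show ?case by (intro exI[of _ "p' * q'"]) simp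
qed

lemma polyfun_eq_0_if_eq_0_off_zeros:
  assumes "polyfun g" "polyfun f" "g a \<noteq> 0" "\<And>y. g y \<noteq> 0 \<Longrightarrow> f y = 0"
  shows "f b = 0"
proof -
  let ?line = "\<lambda>t. \<chi> i j. a$i$j + t * (b$i$j - a$i$j)"
  have ends: "?line 0 = a" "?line 1 = b" by (simp_all add: vec_eq_iff)
  obtain pg where pg: "\<And>t. g (?line t) = poly pg t" using polyfun_along_line[OF assms(1)] by blast
  obtain pf where pf: "\<And>t. f (?line t) = poly pf t" using polyfun_along_line[OF assms(2)] by blast
  have "poly (pg * pf) t = 0" for t
    using assms(4)[of "?line t"] by (auto simp: pg pf)
  then have "pg * pf = 0" using poly_all_0_iff_0 by blast
  moreover have "pg \<noteq> 0" using pg[of 0] assms(3) ends by auto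
  ultimately have "pf = 0" by simp
  then show ?thesis using pf[of 1] ends by simp
qed

lemma polyfun_mult_ne_0:
  assumes "polyfun f" "polyfun g" "f a \<noteq> 0" "g b \<noteq> 0"
  shows "\<exists>y. f y * g y \<noteq> 0"
  using polyfun_eq_0_if_eq_0_off_zeros[OF assms(1,2,3)] assms(4) by auto

lemma polyfun_comp:
  assumes "polyfun p" "\<And>i j. polyfun (\<lambda>y. T y $ i $ j)"
  shows "polyfun (\<lambda>y. p (T y))"
  using assms(1) by induction (simp_all add: polyfun.intros assms(2))

lemma polyfun_diff: "polyfun p \<Longrightarrow> polyfun q \<Longrightarrow> polyfun (\<lambda>y. p y - q y)"
  using polyfun.pf_add[OF _ polyfun.pf_mult[OF polyfun.pf_const[of "-1"]]] by fastforce

lemma polyfun_prod: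
  "finite S \<Longrightarrow> (\<And>k. k \<in> S \<Longrightarrow> polyfun (f k)) \<Longrightarrow> polyfun (\<lambda>y. \<Prod>k\<in>S. f k y)"
  by (induction S rule: finite_induct)
    (auto intro: polyfun.intros polyfun.pf_const[of 1, simplified])

section \<open>Plane conics\<close>

lemma exhaust_6:
  fixes x :: 6
  shows "x = 1 \<or> x = 2 \<or> x = 3 \<or> x = 4 \<or> x = 5 \<or> x = 6"
proof (induct x)
  case (of_int z)
  then have "z = 0 \<or> z = 1 \<or> z = 2 \<or> z = 3 \<or> z = 4 \<or> z = 5" by fastforce
  then show ?case by auto
qed

lemma vector_6 [simp]:
  "(vector [x1,x2,x3,x4,x5,x6] :: 'a::zero^6)$1 = x1"
  "(vector [x1,x2,x3,x4,x5,x6] :: 'a^6)$2 = x2"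
  "(vector [x1,x2,x3,x4,x5,x6] :: 'a^6)$3 = x3"
  "(vector [x1,x2,x3,x4,x5,x6] :: 'a^6)$4 = x4"
  "(vector [x1,x2,x3,x4,x5,x6] :: 'a^6)$5 = x5"
  "(vector [x1,x2,x3,x4,x5,x6] :: 'a^6)$6 = x6"
  unfolding vector_def by simp_all

lemma vec_eq_iff_6:
  "(c::'a^6) = d \<longleftrightarrow> c$1 = d$1 \<and> c$2 = d$2 \<and> c$3 = d$3 \<and> c$4 = d$4 \<and> c$5 = d$5 \<and> c$6 = d$6"
  unfolding vec_eq_iff
proof (intro iffI allI)
  fix j :: 6
  assume "c$1 = d$1 \<and> c$2 = d$2 \<and> c$3 = d$3 \<and> c$4 = d$4 \<and> c$5 = d$5 \<and> c$6 = d$6"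
  then show "c$j = d$j" using exhaust_6[of j] by (elim disjE) simp_all
qed simp_all

definition conic_matrix :: "complex^6 \<Rightarrow> complex^3^3" where
  "conic_matrix c = vector [vector [c$1, c$4/2, c$5/2], vector [c$4/2, c$2, c$6/2],
     vector [c$5/2, c$6/2, c$3]]"

definition conic_coeffs :: "(complex^3 \<Rightarrow> complex) \<Rightarrow> complex^6" where
  "conic_coeffs q = (let e1 = axis 1 1; e2 = axis 2 1; e3 = axis 3 1 in
     vector [q e1, q e2, q e3, q (e1 + e2) - q e1 - q e2, q (e1 + e3) - q e1 - q e3,
       q (e2 + e3) - q e2 - q e3])"

definition conic_disc :: "complex^6 \<Rightarrow> complex" where
  "conic_disc c = 4*c$1*c$2*c$3 + c$4*c$5*c$6 - c$1*(c$6)^2 - c$2*(c$5)^2 - c$3*(c$4)^2"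

definition conic_pullback :: "complex^3^3 \<Rightarrow> complex^6 \<Rightarrow> complex^6" where
  "conic_pullback S c = conic_coeffs (\<lambda>w. conic_eval c (S *v w))"

lemma det_conic_matrix: "det (conic_matrix c) = conic_disc c / 4"
  by (simp add: det_3 conic_matrix_def conic_disc_def field_simps power2_eq_square)

lemma qform_conic_matrix: "qform (conic_matrix c) = conic_eval c"
  by (simp add: fun_eq_iff qform_def sum_3 conic_matrix_def conic_eval_def field_simps
      power2_eq_square)

lemma transpose_conic_matrix: "transpose (conic_matrix c) = conic_matrix c"
  by (simp add: vec_eq_iff forall_3 transpose_def conic_matrix_def)

lemma conic_coeffs_eval [simp]: "conic_coeffs (conic_eval c) = c"
proof -
  have "conic_eval c (axis 1 1) = c$1" "conic_eval c (axis 2 1) = c$2"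
    "conic_eval c (axis 3 1) = c$3" "conic_eval c (axis 1 1 + axis 2 1) = c$1 + c$2 + c$4"
    "conic_eval c (axis 1 1 + axis 3 1) = c$1 + c$3 + c$5"
    "conic_eval c (axis 2 1 + axis 3 1) = c$2 + c$3 + c$6"
    by (simp_all add: conic_eval_def axis_def)
  then show ?thesis by (simp add: conic_coeffs_def vec_eq_iff_6)
qed

lemma conic_eval_inject: "conic_eval c = conic_eval d \<Longrightarrow> c = d"
  by (metis conic_coeffs_eval)

lemma conic_matrix_coeffs_qform:
  assumes "transpose B = B"
  shows "conic_matrix (conic_coeffs (qform B)) = B"
proof -
  have sym: "B$j$i = B$i$j" for i j
    using arg_cong[OF assms, of "\<lambda>X. X$i$j"] by (simp add: transpose_def)
  have "qform B (axis 1 1) = B$1$1" "qform B (axis 2 1) = B$2$2" "qform B (axis 3 1) = B$3$3"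
    "qform B (axis 1 1 + axis 2 1) = B$1$1 + B$2$2 + 2 * B$1$2"
    "qform B (axis 1 1 + axis 3 1) = B$1$1 + B$3$3 + 2 * B$1$3"
    "qform B (axis 2 1 + axis 3 1) = B$2$2 + B$3$3 + 2 * B$2$3"
    by (simp_all add: qform_def sum_3 axis_def sym)
  then show ?thesis
    by (simp add: conic_coeffs_def conic_matrix_def vec_eq_iff forall_3 sym)
qed

definition dot3 :: "complex^3 \<Rightarrow> complex^3 \<Rightarrow> complex" where
  "dot3 x y = (\<Sum>i\<in>UNIV. x$i * y$i)"

lemma qform_eq_dot3: "qform A v = dot3 v (A *v v)"
  by (simp add: qform_def dot3_def matrix_vector_mult_def sum_distrib_left mult.assoc)

lemma dot3_mult_vec: "dot3 (S *v v) w = dot3 v (transpose S *v w)"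
proof -
  have "dot3 (S *v v) w = (\<Sum>i\<in>UNIV. \<Sum>k\<in>UNIV. S$i$k * v$k * w$i)"
    by (simp add: dot3_def matrix_vector_mult_def sum_distrib_right)
  also have "\<dots> = (\<Sum>k\<in>UNIV. \<Sum>i\<in>UNIV. S$i$k * v$k * w$i)"
    by (rule sum.swap)
  also have "\<dots> = dot3 v (transpose S *v w)"
    by (simp add: dot3_def matrix_vector_mult_def transpose_def sum_distrib_left mult_ac)
  finally show ?thesis .
qed

lemma qform_mult_vec: "qform A (S *v v) = qform (transpose S ** A ** S) v"
  by (simp add: qform_eq_dot3 dot3_mult_vec matrix_vector_mul_assoc matrix_mul_assoc)

lemma conic_eval_mult_vec:
  "conic_eval c (S *v w) = qform (transpose S ** conic_matrix c ** S) w"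
  by (simp flip: qform_conic_matrix add: qform_mult_vec)

lemma conic_matrix_pullback:
  "conic_matrix (conic_pullback S c) = transpose S ** conic_matrix c ** S"
  unfolding conic_pullback_def conic_eval_mult_vec
  by (simp add: conic_matrix_coeffs_qform matrix_transpose_mul matrix_mul_assoc
      transpose_conic_matrix)

lemma conic_eval_pullback: "conic_eval (conic_pullback S c) w = conic_eval c (S *v w)"
  by (simp flip: qform_conic_matrix add: conic_matrix_pullback qform_mult_vec)

lemma conic_pullback_pullback: "conic_pullback T (conic_pullback S c) = conic_pullback (S ** T) c"
  by (rule conic_eval_inject) (simp add: fun_eq_iff conic_eval_pullback matrix_vector_mul_assoc)

lemma conic_pullback_id: "conic_pullback (mat 1) c = c"
  by (rule conic_eval_inject) (simp add: fun_eq_iff conic_eval_pullback)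

lemma conic_disc_pullback: "conic_disc (conic_pullback S c) = (det S)^2 * conic_disc c"
proof -
  have "conic_disc (conic_pullback S c) = 4 * det (conic_matrix (conic_pullback S c))"
    by (simp add: det_conic_matrix)
  also have "\<dots> = 4 * (det S * det (conic_matrix c) * det S)"
    by (simp add: conic_matrix_pullback det_mul)
  finally show ?thesis by (simp add: det_conic_matrix power2_eq_square)
qed

section \<open>Cameras and rank-one updates\<close>

definition outer :: "complex^3 \<Rightarrow> complex^3 \<Rightarrow> complex^3^3" where
  "outer f n = (\<chi> i j. f$i * n$j)"

lemma outer_0_left [simp]: "outer 0 n = 0"
  and outer_0_right [simp]: "outer f 0 = 0"
  by (simp_all add: outer_def vec_eq_iff)

lemma outer_add_left: "outer (f + g) n = outer f n + outer g n"
  by (simp add: outer_def vec_eq_iff distrib_right)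

lemma outer_mult_outer: "outer f n ** outer g m = outer (dot3 n g *s f) m"
  by (simp add: vec_eq_iff outer_def matrix_matrix_mult_def dot3_def sum_distrib_left
      sum_distrib_right mult_ac)

lemma outer_mult_vec: "outer f n *v v = dot3 n v *s f"
  by (simp add: vec_eq_iff outer_def matrix_vector_mult_def dot3_def sum_distrib_left mult_ac)

lemma rank_one_update_mult_vec: "(mat 1 + outer f n) *v v = v + dot3 n v *s f"
  by (simp add: matrix_vector_mult_add_rdistrib outer_mult_vec)

lemma dot3_scale_right: "dot3 n (c *s f) = c * dot3 n f"
  and dot3_uminus_right: "dot3 n (- f) = - dot3 n f"
  by (simp_all add: dot3_def sum_distrib_left sum_negf mult_ac)

lemma matrix_add_rdistrib: "(A + B) ** C = A ** C + B ** C"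
  by (simp add: matrix_matrix_mult_def vec_eq_iff sum.distrib distrib_right)

lemma rank_one_update_mult:
  "(mat 1 + outer f n) ** (mat 1 + outer g n) = mat 1 + outer (f + g + dot3 n g *s f) n"
  by (simp add: matrix_add_ldistrib matrix_add_rdistrib outer_mult_outer outer_add_left
      add_ac)

lemma det_rank_one_update: "det (mat 1 + outer f n) = 1 + dot3 n f"
  by (simp add: det_3 outer_def mat_def dot3_def sum_3 algebra_simps)

text \<open>Sherman-Morrison formula.\<close>
definition rank_one_inv :: "complex^3 \<Rightarrow> complex^3 \<Rightarrow> complex^3" where
  "rank_one_inv f n = (- 1 / (1 + dot3 n f)) *s f"

lemma rank_one_inv_nondegenerate:
  "1 + dot3 n f \<noteq> 0 \<Longrightarrow> 1 + dot3 n (rank_one_inv f n) \<noteq> 0"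
  by (simp add: rank_one_inv_def dot3_scale_right dot3_uminus_right field_simps)

lemma rank_one_update_inverse:
  assumes "1 + dot3 n f \<noteq> 0"
  shows "(mat 1 + outer f n) ** (mat 1 + outer (rank_one_inv f n) n) = mat 1"
    and "(mat 1 + outer (rank_one_inv f n) n) ** (mat 1 + outer f n) = mat 1"
proof -
  define c where "c = - 1 / (1 + dot3 n f)"
  have inv: "rank_one_inv f n = c *s f"
    by (simp add: rank_one_inv_def c_def)
  have "(1 + c + c * dot3 n f) *s f = 0"
    using assms by (simp add: c_def field_simps)
  then have "f + c *s f + (c * dot3 n f) *s f = 0" and "c *s f + f + dot3 n f *s (c *s f) = 0"
    by (simp_all add: vec_eq_iff algebra_simps)
  then show "(mat 1 + outer f n) ** (mat 1 + outer (rank_one_inv f n) n) = mat 1"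
    and "(mat 1 + outer (rank_one_inv f n) n) ** (mat 1 + outer f n) = mat 1"
    by (simp_all add: rank_one_update_mult inv dot3_scale_right)
qed

text \<open>The plane x4 = n . (x1, x2, x3), parametrized by (x1, x2, x3).\<close>
definition plane_embedding :: "complex^3 \<Rightarrow> complex^3^4" where
  "plane_embedding n = (\<chi> r c. if r = 4 then n$c else if r = 1 \<and> c = 1 \<or> r = 2 \<and> c = 2 \<or>
     r = 3 \<and> c = 3 then 1 else 0)"

text \<open>The camera x |-> (x1, x2, x3) + x4 f, with center (-f, 1).\<close>
definition camera_matrix :: "complex^3 \<Rightarrow> complex^4^3" where
  "camera_matrix f = (\<chi> k r. if r = 4 then f$k else if k = 1 \<and> r = 1 \<or> k = 2 \<and> r = 2 \<or>
     k = 3 \<and> r = 3 then 1 else 0)"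

lemma camera_matrix_mult_plane_embedding:
  "camera_matrix f ** plane_embedding n = mat 1 + outer f n"
  by (simp add: vec_eq_iff forall_3 matrix_matrix_mult_def sum_4 camera_matrix_def
      plane_embedding_def mat_def outer_def)

lemma camera_camera_matrix: "camera (camera_matrix f)"
  unfolding camera_def
proof (rule surjI)
  fix y
  show "camera_matrix f *v (plane_embedding 0 *v y) = y"
    by (simp add: matrix_vector_mul_assoc camera_matrix_mult_plane_embedding)
qed

lemma inj_plane_embedding: "inj ((*v) (plane_embedding n))"
proof (rule injI)
  fix x y
  assume "plane_embedding n *v x = plane_embedding n *v y"
  then have "camera_matrix 0 *v (plane_embedding n *v x) =
      camera_matrix 0 *v (plane_embedding n *v y)"
    by simp
  then show "x = y" by (simp add: matrix_vector_mul_assoc camera_matrix_mult_plane_embedding)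
qed

lemma center_off_plane_if_left_inverse:
  assumes "S ** (C ** M) = mat 1"
  shows "center_off_plane C M"
  unfolding center_off_plane_def
proof (intro allI impI notI)
  fix x
  assume x: "x \<noteq> 0 \<and> C *v x = 0" and "x \<in> range ((*v) M)"
  then obtain v where v: "x = M *v v" by blast
  have "v = (S ** (C ** M)) *v v" using assms by simp
  also have "\<dots> = 0" using x v by (simp flip: matrix_vector_mul_assoc)
  finally show False using v x by simp
qed

lemma is_image_conic_pullback:
  assumes inverse: "S ** (C ** M) = mat 1"
  shows "is_image_conic (conic_pullback S c) C M (conic_matrix c)"
proof -
  have inverse': "(C ** M) ** S = mat 1"
    using inverse matrix_left_right_inverse by blast
  have SCM: "S *v (C *v (M *v v)) = v" for v
    using inverse by (simp add: matrix_vector_mul_assoc)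
  have CMS: "C *v (M *v (S *v w)) = w" for w
    using inverse' by (simp add: matrix_vector_mul_assoc matrix_mul_assoc)
  have "w \<in> (\<lambda>x. C *v x) ` conic_cone M (conic_matrix c) \<longleftrightarrow>
      w \<noteq> 0 \<and> conic_eval (conic_pullback S c) w = 0" for w
  proof
    assume "w \<in> (\<lambda>x. C *v x) ` conic_cone M (conic_matrix c)"
    then obtain v where "v \<noteq> 0" "conic_eval c v = 0" "w = C *v (M *v v)"
      by (auto simp: conic_cone_def qform_conic_matrix)
    then show "w \<noteq> 0 \<and> conic_eval (conic_pullback S c) w = 0"
      using SCM[of v] by (auto simp: conic_eval_pullback)
  next
    assume "w \<noteq> 0 \<and> conic_eval (conic_pullback S c) w = 0"
    then have "S *v w \<noteq> 0" "qform (conic_matrix c) (S *v w) = 0"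
      using CMS[of w] by (auto simp: conic_eval_pullback qform_conic_matrix)
    then show "w \<in> (\<lambda>x. C *v x) ` conic_cone M (conic_matrix c)"
      unfolding conic_cone_def by (intro image_eqI[of _ _ "M *v (S *v w)"]) (auto simp: CMS)
  qed
  then show ?thesis
    unfolding is_image_conic_def by blast
qed

section \<open>Invariance under moves of a single conic\<close>

definition camera_invariant ::
    "(complex^6^'d::finite \<Rightarrow> complex) \<Rightarrow> (complex^6^'d \<Rightarrow> complex) \<Rightarrow> bool" where
  "camera_invariant P Q \<longleftrightarrow> (\<forall>(M :: 'd \<Rightarrow> complex^3^4) (A :: 'd \<Rightarrow> complex^3^3) C C'
     (c :: complex^6^'d) c'.
       (\<forall>i. space_conic (M i) (A i)) \<longrightarrow> camera C \<longrightarrow> camera C' \<longrightarrow>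
       (\<forall>i. center_off_plane C (M i) \<and> center_off_plane C' (M i)) \<longrightarrow>
       (\<forall>i. is_image_conic (c $ i) C (M i) (A i) \<and> is_image_conic (c' $ i) C' (M i) (A i)) \<longrightarrow>
       Q c \<noteq> 0 \<longrightarrow> Q c' \<noteq> 0 \<longrightarrow> P c / Q c = P c' / Q c')"

definition pullback_block :: "'d::finite \<Rightarrow> complex^3^3 \<Rightarrow> complex^6^'d \<Rightarrow> complex^6^'d" where
  "pullback_block i S y = (\<chi> l. if l = i then conic_pullback S (y$i) else y$l)"

lemma pullback_block_nth:
  "pullback_block i S y $ l = conic_pullback (if l = i then S else mat 1) (y$l)"
  by (simp add: pullback_block_def conic_pullback_id)

lemma pullback_block_pullback_block:
  "pullback_block i T (pullback_block i S y) = pullback_block i (S ** T) y"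
  by (simp add: pullback_block_def vec_eq_iff conic_pullback_pullback)

lemma pullback_block_id: "pullback_block i (mat 1) y = y"
  by (simp add: pullback_block_def vec_eq_iff conic_pullback_id)

lemma camera_invariant_pullback_block:
  assumes inv: "camera_invariant P Q" and nondeg: "1 + dot3 n f \<noteq> 0"
    and disc: "\<forall>l. conic_disc (y$l) \<noteq> 0"
    and "Q y \<noteq> 0" and "Q (pullback_block i (mat 1 + outer f n) y) \<noteq> 0"
  shows "P y / Q y =
    P (pullback_block i (mat 1 + outer f n) y) / Q (pullback_block i (mat 1 + outer f n) y)"
proof -
  define S where "S l = (if l = i then mat 1 + outer f n else mat 1)" for l
  define M where "M l = plane_embedding (if l = i then n else 0)" for l
  define C where "C = camera_matrix 0"
  define C' where "C' = camera_matrix (rank_one_inv f n)"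
  have CM: "C ** M l = mat 1" for l
    by (simp add: C_def M_def camera_matrix_mult_plane_embedding)
  have C'M: "S l ** (C' ** M l) = mat 1" for l
    using rank_one_update_inverse(1)[OF nondeg]
    by (simp add: S_def C'_def M_def camera_matrix_mult_plane_embedding)
  have "\<forall>l. space_conic (M l) (conic_matrix (y$l))"
    using disc by (simp add: space_conic_def M_def inj_plane_embedding transpose_conic_matrix
        det_conic_matrix)
  moreover have "camera C" "camera C'"
    by (simp_all add: C_def C'_def camera_camera_matrix)
  moreover have "\<forall>l. center_off_plane C (M l) \<and> center_off_plane C' (M l)"
    using center_off_plane_if_left_inverse[of "mat 1"] center_off_plane_if_left_inverse[OF C'M]
    by (simp add: CM)
  moreover have "\<forall>l. is_image_conic (y$l) C (M l) (conic_matrix (y$l)) \<and>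
      is_image_conic (pullback_block i (mat 1 + outer f n) y $ l) C' (M l) (conic_matrix (y$l))"
    using is_image_conic_pullback[of "mat 1" C "M _"] is_image_conic_pullback[OF C'M]
    by (simp add: CM conic_pullback_id pullback_block_nth S_def)
  ultimately show ?thesis
    using inv[unfolded camera_invariant_def, rule_format, of M "\<lambda>l. conic_matrix (y$l)"]
      assms(4,5) by blast
qed

lemma polyfun_conic_eval: "polyfun (\<lambda>y::complex^6^'d. conic_eval (y$i) v)"
  unfolding conic_eval_def by (intro polyfun.intros)

lemma polyfun_conic_disc: "polyfun (\<lambda>y::complex^6^'d. conic_disc (y$i))"
  unfolding conic_disc_def power2_eq_square by (intro polyfun_diff polyfun.intros)

lemma polyfun_pullback_block: "polyfun (\<lambda>y::complex^6^'d::finite. pullback_block i S y $ l $ j)"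
  using exhaust_6[of j]
  by (elim disjE) (simp_all add: pullback_block_nth conic_pullback_def conic_coeffs_def Let_def
      polyfun_diff polyfun_conic_eval)

definition tuple_disc :: "complex^6^'d::finite \<Rightarrow> complex" where
  "tuple_disc y = (\<Prod>l\<in>UNIV. conic_disc (y$l))"

lemma polyfun_tuple_disc: "polyfun tuple_disc"
  unfolding tuple_disc_def[abs_def] by (rule polyfun_prod) (simp_all add: polyfun_conic_disc)

lemma tuple_disc_ne_0_iff: "tuple_disc y \<noteq> 0 \<longleftrightarrow> (\<forall>l. conic_disc (y$l) \<noteq> 0)"
  by (simp add: tuple_disc_def)

definition std_conic :: "complex^6" where
  "std_conic = vector [1, 1, 1, 0, 0, 0]"

lemma tuple_disc_std_conic: "tuple_disc (\<chi> l. std_conic) \<noteq> 0"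
  by (simp add: tuple_disc_ne_0_iff std_conic_def conic_disc_def)

text \<open>Surjectivity keeps Q o T a nonzero polynomial, which makes the class closed under
  composition.\<close>
definition ratio_preserving ::
    "(complex^6^'d::finite \<Rightarrow> complex) \<Rightarrow> (complex^6^'d \<Rightarrow> complex) \<Rightarrow>
      (complex^6^'d \<Rightarrow> complex^6^'d) \<Rightarrow> bool" where
  "ratio_preserving P Q T \<longleftrightarrow> (\<forall>l j. polyfun (\<lambda>y. T y $ l $ j)) \<and> surj T \<and>
     (\<forall>y. P y * Q (T y) = P (T y) * Q y)"

lemma ratio_preserving_id: "ratio_preserving P Q (\<lambda>y. y)"
  by (simp add: ratio_preserving_def polyfun.pf_var)

lemma ratio_preserving_comp:
  assumes P: "polyfun P" and Q: "polyfun Q" and "Q a \<noteq> 0"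
    and T: "ratio_preserving P Q T" and U: "ratio_preserving P Q U"
  shows "ratio_preserving P Q (U \<circ> T)"
proof -
  have T_poly: "\<And>l j. polyfun (\<lambda>y. T y $ l $ j)" and "surj T"
    and T_ratio: "\<And>y. P y * Q (T y) = P (T y) * Q y"
    using T by (auto simp: ratio_preserving_def)
  have U_poly: "\<And>l j. polyfun (\<lambda>y. U y $ l $ j)" and "surj U"
    and U_ratio: "\<And>y. P y * Q (U y) = P (U y) * Q y"
    using U by (auto simp: ratio_preserving_def)
  have UT_poly: "polyfun (\<lambda>y. (U \<circ> T) y $ l $ j)" for l j
    using polyfun_comp[OF U_poly T_poly] by simp
  obtain b where "T b = a" using \<open>surj T\<close> by (metis surj_def)
  have "P y * Q (U (T y)) - P (U (T y)) * Q y = 0" for y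
  proof (rule polyfun_eq_0_if_eq_0_off_zeros[where g = "\<lambda>y. Q (T y)" and a = b])
    show "polyfun (\<lambda>y. Q (T y))" by (rule polyfun_comp[OF Q T_poly])
    show "polyfun (\<lambda>y. P y * Q (U (T y)) - P (U (T y)) * Q y)"
      using polyfun_comp[OF P UT_poly] polyfun_comp[OF Q UT_poly]
      by (intro polyfun_diff polyfun.pf_mult P Q) simp_all
    show "Q (T b) \<noteq> 0" using \<open>T b = a\<close> \<open>Q a \<noteq> 0\<close> by simp
  next
    fix y
    assume "Q (T y) \<noteq> 0"
    moreover have "Q (T y) * (P y * Q (U (T y))) = Q (T y) * (P (U (T y)) * Q y)"
      using T_ratio[of y] U_ratio[of "T y"] by (metis mult.commute mult.left_commute)
    ultimately show "P y * Q (U (T y)) - P (U (T y)) * Q y = 0" by simp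
  qed
  then show ?thesis
    using UT_poly comp_surj[OF \<open>surj T\<close> \<open>surj U\<close>] by (simp add: ratio_preserving_def)
qed

lemma ratio_preserving_pullback_block:
  assumes P: "polyfun P" and Q: "polyfun Q" and "Q a \<noteq> 0"
    and inv: "camera_invariant P Q" and nondeg: "1 + dot3 n f \<noteq> 0"
  shows "ratio_preserving P Q (pullback_block i (mat 1 + outer f n))"
proof -
  let ?T = "pullback_block i (mat 1 + outer f n)"
  let ?T' = "pullback_block i (mat 1 + outer (rank_one_inv f n) n)"
  have T_T': "?T (?T' y) = y" for y
    by (simp add: pullback_block_pullback_block rank_one_update_inverse(2)[OF nondeg]
        pullback_block_id)
  have QT: "polyfun (\<lambda>y. Q (?T y))" by (rule polyfun_comp[OF Q polyfun_pullback_block])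
  have "\<exists>y. Q y * Q (?T y) \<noteq> 0"
    by (rule polyfun_mult_ne_0[OF Q QT \<open>Q a \<noteq> 0\<close>, of "?T' a"]) (simp add: T_T' \<open>Q a \<noteq> 0\<close>)
  then obtain b where "Q b * Q (?T b) * tuple_disc b \<noteq> 0"
    using polyfun_mult_ne_0[OF polyfun.pf_mult[OF Q QT] polyfun_tuple_disc _ tuple_disc_std_conic]
    by blast
  have "P y * Q (?T y) - P (?T y) * Q y = 0" for y
  proof (rule polyfun_eq_0_if_eq_0_off_zeros
      [where g = "\<lambda>y. Q y * Q (?T y) * tuple_disc y" and a = b])
    show "polyfun (\<lambda>y. Q y * Q (?T y) * tuple_disc y)"
      by (intro polyfun.pf_mult Q QT polyfun_tuple_disc)
    show "polyfun (\<lambda>y. P y * Q (?T y) - P (?T y) * Q y)"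
      by (intro polyfun_diff polyfun.pf_mult P Q QT polyfun_comp[OF P polyfun_pullback_block])
  next
    fix y
    assume "Q y * Q (?T y) * tuple_disc y \<noteq> 0"
    then have "Q y \<noteq> 0" "Q (?T y) \<noteq> 0" "P y / Q y = P (?T y) / Q (?T y)"
      using camera_invariant_pullback_block[OF inv nondeg] by (auto simp: tuple_disc_ne_0_iff)
    then show "P y * Q (?T y) - P (?T y) * Q y = 0"
      by (simp add: field_simps)
  qed fact
  moreover have "surj ?T"
    by (metis T_T' surjI)
  ultimately show ?thesis
    by (simp add: ratio_preserving_def polyfun_pullback_block)
qed

section \<open>Normal form of nondegenerate conics\<close>

definition conic_move :: "complex^6 \<Rightarrow> complex^6 \<Rightarrow> bool" where
  "conic_move c c' \<longleftrightarrow> (\<exists>f n. 1 + dot3 n f \<noteq> 0 \<and> c' = conic_pullback (mat 1 + outer f n) c)"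

definition elementary :: "3 \<Rightarrow> 3 \<Rightarrow> complex \<Rightarrow> complex^3^3" where
  "elementary k j t = mat 1 + outer (t *s axis k 1) (axis j 1)"

lemma dot3_axis_left: "dot3 (axis j 1) v = v$j"
  by (cases j rule: exhaust_3[elim_format]) (auto simp: dot3_def sum_3 axis_def)

lemma elementary_mult_vec: "elementary k j t *v v = v + (t * v$j) *s axis k 1"
  by (simp add: elementary_def rank_one_update_mult_vec dot3_axis_left)

lemma dot3_axis_axis: "dot3 (axis j 1) (t *s axis k 1) = (if k = j then t else 0)"
  unfolding dot3_axis_left by (simp add: axis_def)

lemma conic_move_elementary:
  "k \<noteq> j \<or> t \<noteq> -1 \<Longrightarrow> conic_move c (conic_pullback (elementary k j t) c)"
  unfolding conic_move_def elementary_def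
  by (intro exI[of _ "t *s axis k 1"] exI[of _ "axis j 1"]) (auto simp: dot3_axis_axis add_eq_0_iff)

lemma conic_moves_elementaryI:
  "k \<noteq> j \<or> t \<noteq> -1 \<Longrightarrow> conic_move\<^sup>*\<^sup>* (conic_pullback (elementary k j t) c) d \<Longrightarrow> conic_move\<^sup>*\<^sup>* c d"
  by (rule converse_rtranclp_into_rtranclp[where r = conic_move, OF conic_move_elementary])

lemma conic_disc_pullback_elementary:
  "k \<noteq> j \<or> t \<noteq> -1 \<Longrightarrow> conic_disc c \<noteq> 0 \<Longrightarrow> conic_disc (conic_pullback (elementary k j t) c) \<noteq> 0"
  by (auto simp: conic_disc_pullback elementary_def det_rank_one_update dot3_axis_axis add_eq_0_iff)

lemma conic_pullback_elementary:
  "conic_pullback (elementary 1 1 t) c = vector [(1+t)^2*c$1, c$2, c$3, (1+t)*c$4, (1+t)*c$5, c$6]"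
  "conic_pullback (elementary 2 2 t) c = vector [c$1, (1+t)^2*c$2, c$3, (1+t)*c$4, c$5, (1+t)*c$6]"
  "conic_pullback (elementary 3 3 t) c = vector [c$1, c$2, (1+t)^2*c$3, c$4, (1+t)*c$5, (1+t)*c$6]"
  "conic_pullback (elementary 2 1 t) c =
     vector [c$1 + t^2*c$2 + t*c$4, c$2, c$3, 2*t*c$2 + c$4, c$5 + t*c$6, c$6]"
  "conic_pullback (elementary 3 1 t) c =
     vector [c$1 + t^2*c$3 + t*c$5, c$2, c$3, c$4 + t*c$6, 2*t*c$3 + c$5, c$6]"
  "conic_pullback (elementary 1 2 t) c =
     vector [c$1, c$2 + t^2*c$1 + t*c$4, c$3, 2*t*c$1 + c$4, c$5, c$6 + t*c$5]"
  "conic_pullback (elementary 1 3 t) c =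
     vector [c$1, c$2, c$3 + t^2*c$1 + t*c$5, c$4, c$5 + 2*t*c$1, c$6 + t*c$4]"
  "conic_pullback (elementary 3 2 t) c =
     vector [c$1, c$2 + t^2*c$3 + t*c$6, c$3, c$4 + t*c$5, c$5, c$6 + 2*t*c$3]"
  "conic_pullback (elementary 2 3 t) c =
     vector [c$1, c$2, c$3 + t^2*c$2 + t*c$6, c$4, c$5 + t*c$4, c$6 + 2*t*c$2]"
  by (simp_all add: conic_pullback_def conic_coeffs_def elementary_mult_vec conic_eval_def axis_def
      vec_eq_iff_6 power2_eq_square algebra_simps)

lemma conic_moves_diagonal_to_std:
  assumes "c$4 = 0" "c$5 = 0" "c$6 = 0" "c$1 \<noteq> 0" "c$2 \<noteq> 0" "c$3 \<noteq> 0"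
  shows "conic_move\<^sup>*\<^sup>* c std_conic"
proof -
  define s where "s x = 1 / csqrt x - 1" for x :: complex
  have s: "(1 + s x)^2 * x = 1" "s x \<noteq> -1" if "x \<noteq> 0" for x
    using that by (simp_all add: s_def power_divide power2_csqrt)
  have "conic_pullback (elementary 3 3 (s (c$3))) (conic_pullback (elementary 2 2 (s (c$2)))
      (conic_pullback (elementary 1 1 (s (c$1))) c)) = std_conic"
    using assms s by (simp add: conic_pullback_elementary std_conic_def vec_eq_iff_6)
  then show ?thesis
    using assms s by (metis conic_moves_elementaryI rtranclp.rtrancl_refl)
qed

lemma conic_moves_to_std_x_split_y2_ne_0:
  assumes "c$4 = 0" "c$5 = 0" "c$1 \<noteq> 0" "c$2 \<noteq> 0" "conic_disc c \<noteq> 0"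
  shows "conic_move\<^sup>*\<^sup>* c std_conic"
proof -
  define c' where "c' = conic_pullback (elementary 2 3 (- c$6 / (2 * c$2))) c"
  have c': "c'$1 = c$1" "c'$2 = c$2" "c'$4 = 0" "c'$5 = 0" "c'$6 = 0"
    using assms by (simp_all add: c'_def conic_pullback_elementary)
  moreover have "conic_disc c' \<noteq> 0"
    unfolding c'_def by (rule conic_disc_pullback_elementary) (simp_all add: assms)
  ultimately have "c'$3 \<noteq> 0"
    by (auto simp: conic_disc_def)
  then have "conic_move\<^sup>*\<^sup>* c' std_conic"
    using c' assms by (intro conic_moves_diagonal_to_std) auto
  then show ?thesis
    unfolding c'_def by (rule conic_moves_elementaryI[rotated]) simp
qed

lemma ex_nonroot_quadratic:
  fixes a b :: "'a::field_char_0"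
  shows "b \<noteq> 0 \<Longrightarrow> \<exists>t. t^2 * a + t * b \<noteq> 0"
proof (rule ccontr)
  assume "b \<noteq> 0" "\<not> (\<exists>t. t^2 * a + t * b \<noteq> 0)"
  then have "1^2 * a + 1 * b = 0" "2^2 * a + 2 * b = 0" by blast+
  then have "a + b = 0" "4 * a + 2 * b = 0" by simp_all
  moreover have "- 2 * b = (4 * a + 2 * b) - 4 * (a + b)" by (simp add: algebra_simps)
  ultimately show False using \<open>b \<noteq> 0\<close> by simp
qed

lemma conic_moves_to_std_x_split:
  assumes "c$4 = 0" "c$5 = 0" "c$1 \<noteq> 0" "conic_disc c \<noteq> 0"
  shows "conic_move\<^sup>*\<^sup>* c std_conic"
proof (cases "c$2 = 0")
  case False
  then show ?thesis using assms conic_moves_to_std_x_split_y2_ne_0 by blast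
next
  case True
  then have "c$6 \<noteq> 0" using assms by (auto simp: conic_disc_def)
  then obtain t where t: "t^2 * c$3 + t * c$6 \<noteq> 0"
    using ex_nonroot_quadratic by blast
  define c' where "c' = conic_pullback (elementary 3 2 t) c"
  have "c'$1 = c$1" "c'$2 \<noteq> 0" "c'$4 = 0" "c'$5 = 0"
    using assms True t by (simp_all add: c'_def conic_pullback_elementary)
  moreover have "conic_disc c' \<noteq> 0"
    unfolding c'_def by (rule conic_disc_pullback_elementary) (simp_all add: assms)
  ultimately have "conic_move\<^sup>*\<^sup>* c' std_conic"
    using assms by (intro conic_moves_to_std_x_split_y2_ne_0) auto
  then show ?thesis
    unfolding c'_def by (rule conic_moves_elementaryI[rotated]) simp
qed

text \<open>Completing the square in x.\<close>
lemma conic_moves_to_std_x2_ne_0: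
  assumes "c$1 \<noteq> 0" "conic_disc c \<noteq> 0"
  shows "conic_move\<^sup>*\<^sup>* c std_conic"
proof -
  define c' where "c' = conic_pullback (elementary 1 2 (- c$4 / (2 * c$1))) c"
  define c'' where "c'' = conic_pullback (elementary 1 3 (- c'$5 / (2 * c'$1))) c'"
  have c': "c'$1 = c$1" "c'$4 = 0"
    using assms by (simp_all add: c'_def conic_pullback_elementary)
  have "c''$1 = c$1" "c''$4 = 0" "c''$5 = 0"
    using assms c' by (simp_all add: c''_def conic_pullback_elementary)
  moreover have "conic_disc c'' \<noteq> 0"
    unfolding c''_def c'_def by (intro conic_disc_pullback_elementary) (simp_all add: assms)
  ultimately have "conic_move\<^sup>*\<^sup>* c'' std_conic"
    using assms by (intro conic_moves_to_std_x_split) auto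
  then have "conic_move\<^sup>*\<^sup>* c' std_conic"
    unfolding c''_def by (rule conic_moves_elementaryI[rotated]) simp
  then show ?thesis
    unfolding c'_def by (rule conic_moves_elementaryI[rotated]) simp
qed

lemma conic_moves_to_std:
  assumes "conic_disc c \<noteq> 0"
  shows "conic_move\<^sup>*\<^sup>* c std_conic"
proof (cases "c$1 = 0")
  case False
  then show ?thesis using assms by (rule conic_moves_to_std_x2_ne_0)
next
  case True
  obtain k t where k: "k \<noteq> 1" and x2: "(conic_pullback (elementary k 1 t) c)$1 \<noteq> 0"
  proof (cases "c$4 = 0")
    case False
    then obtain t where "t^2 * c$2 + t * c$4 \<noteq> 0" using ex_nonroot_quadratic by blast
    then show ?thesis using True by (intro that[of 2 t]) (simp_all add: conic_pullback_elementary)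
  next
    case c4: True
    then have "c$5 \<noteq> 0" using assms True by (auto simp: conic_disc_def)
    then obtain t where "t^2 * c$3 + t * c$5 \<noteq> 0" using ex_nonroot_quadratic by blast
    then show ?thesis using True by (intro that[of 3 t]) (simp_all add: conic_pullback_elementary)
  qed
  have "conic_disc (conic_pullback (elementary k 1 t) c) \<noteq> 0"
    using k assms by (intro conic_disc_pullback_elementary) auto
  with x2 have "conic_move\<^sup>*\<^sup>* (conic_pullback (elementary k 1 t) c) std_conic"
    by (rule conic_moves_to_std_x2_ne_0)
  then show ?thesis
    by (rule conic_moves_elementaryI[OF disjI1[OF k]])
qed

definition tuple_move :: "complex^6^'d::finite \<Rightarrow> complex^6^'d \<Rightarrow> bool" where
  "tuple_move y z \<longleftrightarrow>
     (\<exists>i f n. 1 + dot3 n f \<noteq> 0 \<and> z = pullback_block i (mat 1 + outer f n) y)"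

lemma symp_tuple_move: "symp tuple_move"
proof (rule sympI)
  fix y z :: "complex^6^'d"
  assume "tuple_move y z"
  then obtain i f n where nondeg: "1 + dot3 n f \<noteq> 0"
    and z: "z = pullback_block i (mat 1 + outer f n) y"
    unfolding tuple_move_def by blast
  have "y = pullback_block i (mat 1 + outer (rank_one_inv f n) n) z"
    by (simp add: z pullback_block_pullback_block rank_one_update_inverse(1)[OF nondeg]
        pullback_block_id)
  then show "tuple_move z y"
    unfolding tuple_move_def using rank_one_inv_nondegenerate[OF nondeg] by blast
qed

lemma tuple_moves_if_conic_moves:
  "conic_move\<^sup>*\<^sup>* (y$i) c \<Longrightarrow> tuple_move\<^sup>*\<^sup>* y (\<chi> l. if l = i then c else y$l)"
proof (induction rule: rtranclp_induct)
  case base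
  have "(\<chi> l. if l = i then y$i else y$l) = y" by (simp add: vec_eq_iff)
  then show ?case by simp
next
  case (step c c')
  then obtain f n where "1 + dot3 n f \<noteq> 0" "c' = conic_pullback (mat 1 + outer f n) c"
    unfolding conic_move_def by blast
  then have "tuple_move (\<chi> l. if l = i then c else y$l) (\<chi> l. if l = i then c' else y$l)"
    unfolding tuple_move_def pullback_block_def by (intro exI[of _ i]) (auto simp: vec_eq_iff)
  with step.IH show ?case by simp
qed

lemma tuple_moves_to_std:
  fixes y :: "complex^6^'d::finite"
  assumes "\<forall>l. conic_disc (y$l) \<noteq> 0"
  shows "tuple_move\<^sup>*\<^sup>* y (\<chi> l. std_conic)"
proof -
  have "tuple_move\<^sup>*\<^sup>* y (\<chi> l. if l \<in> I then std_conic else y$l)" if "finite I" for I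
    using that
  proof (induction rule: finite_induct)
    case empty
    then show ?case by (simp add: vec_lambda_eta)
  next
    case (insert i I)
    let ?z = "\<chi> l. if l \<in> I then std_conic else y$l"
    have "conic_move\<^sup>*\<^sup>* (?z$i) std_conic"
      using insert.hyps(2) assms conic_moves_to_std by simp
    then have "tuple_move\<^sup>*\<^sup>* ?z (\<chi> l. if l = i then std_conic else ?z$l)"
      by (rule tuple_moves_if_conic_moves)
    moreover have "(\<chi> l. if l = i then std_conic else ?z$l) =
        (\<chi> l. if l \<in> insert i I then std_conic else y$l)"
      by (simp add: vec_eq_iff)
    ultimately show ?case
      using insert.IH by simp
  qed
  from this[of UNIV] show ?thesis by simp
qed

lemma ratio_preserving_if_tuple_moves:
  assumes "polyfun P" "polyfun Q" "Q a \<noteq> 0" "camera_invariant P Q"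
  shows "tuple_move\<^sup>*\<^sup>* y z \<Longrightarrow> \<exists>T. ratio_preserving P Q T \<and> T y = z"
proof (induction rule: rtranclp_induct)
  case base
  show ?case using ratio_preserving_id by blast
next
  case (step z w)
  then obtain T where T: "ratio_preserving P Q T" "T y = z" by blast
  from step.hyps(2) obtain i f n where "1 + dot3 n f \<noteq> 0"
    and w: "w = pullback_block i (mat 1 + outer f n) z"
    unfolding tuple_move_def by blast
  then have "ratio_preserving P Q (pullback_block i (mat 1 + outer f n) \<circ> T)"
    by (intro ratio_preserving_comp[OF assms(1-3) T(1)] ratio_preserving_pullback_block[OF assms])
  then show ?case using T(2) w by auto
qed

lemma camera_invariant_cross_eq:
  assumes P: "polyfun P" and Q: "polyfun Q" and "Q a \<noteq> 0" and "camera_invariant P Q"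
  shows "P y * Q y' = P y' * Q y"
proof -
  have both_nondegenerate: "P y * Q y' = P y' * Q y"
    if "tuple_disc y \<noteq> 0" "tuple_disc y' \<noteq> 0" for y y'
  proof -
    have "tuple_move\<^sup>*\<^sup>* y (\<chi> l. std_conic)" "tuple_move\<^sup>*\<^sup>* y' (\<chi> l. std_conic)"
      using that by (simp_all add: tuple_moves_to_std tuple_disc_ne_0_iff)
    then have "tuple_move\<^sup>*\<^sup>* y y'"
      using sympD[OF symp_rtranclp[OF symp_tuple_move]] by (metis rtranclp_trans)
    then obtain T where "ratio_preserving P Q T" "T y = y'"
      using ratio_preserving_if_tuple_moves[OF assms] by blast
    then show ?thesis by (auto simp: ratio_preserving_def)
  qed
  have cross_poly: "polyfun (\<lambda>y. P y * Q y' - P y' * Q y)" for y'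
    by (intro polyfun_diff polyfun.pf_mult P Q polyfun.pf_const)
  have right_nondegenerate: "P y * Q y' = P y' * Q y" if "tuple_disc y' \<noteq> 0" for y y'
    using polyfun_eq_0_if_eq_0_off_zeros[OF polyfun_tuple_disc cross_poly tuple_disc_std_conic]
      both_nondegenerate that by simp
  have "P y' * Q y - P y * Q y' = 0"
    using polyfun_eq_0_if_eq_0_off_zeros[OF polyfun_tuple_disc cross_poly tuple_disc_std_conic]
      right_nondegenerate by simp
  then show ?thesis by simp
qed

theorem mainTheorem3:
  fixes P Q :: "complex^6^'d::finite \<Rightarrow> complex"
  assumes rat: "rational_fun P Q"
    and inv: "\<And>(M :: 'd \<Rightarrow> complex^3^4) (A :: 'd \<Rightarrow> complex^3^3) C C' (c :: complex^6^'d) c'.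
       (\<forall>i. space_conic (M i) (A i)) \<Longrightarrow> camera C \<Longrightarrow> camera C' \<Longrightarrow>
       (\<forall>i. center_off_plane C (M i) \<and> center_off_plane C' (M i)) \<Longrightarrow>
       (\<forall>i. is_image_conic (c $ i) C (M i) (A i) \<and> is_image_conic (c' $ i) C' (M i) (A i)) \<Longrightarrow>
       Q c \<noteq> 0 \<Longrightarrow> Q c' \<noteq> 0 \<Longrightarrow> P c / Q c = P c' / Q c'"
  shows "\<exists>k. \<forall>y. Q y \<noteq> 0 \<longrightarrow> P y / Q y = k"
proof -
  have "polyfun P" "polyfun Q" using rat by (auto simp: rational_fun_def)
  obtain a where "Q a \<noteq> 0" using rat by (auto simp: rational_fun_def)
  have "camera_invariant P Q"
    unfolding camera_invariant_def using inv by blast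
  then have "P y * Q a = P a * Q y" for y
    by (rule camera_invariant_cross_eq[OF \<open>polyfun P\<close> \<open>polyfun Q\<close> \<open>Q a \<noteq> 0\<close>])
  then have "P y / Q y = P a / Q a" if "Q y \<noteq> 0" for y
    using that \<open>Q a \<noteq> 0\<close> by (simp add: field_simps)
  then show ?thesis by blast
qed

end
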